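(* Let $G=(V,E)$ be an undirected simple graph, let $k\ge 2$ be an integer and $v\in V$. Let $m_v$ be the number of edges of the ego-network $G_{N(v)}$. Then $$score(v)\le \min\Big\{\Big\lfloor \frac{d(v)}{k}\Big\rfloor,\ \Big\lfloor\frac{2m_v}{k(k-1)}\Big\rfloor\Big\}.$$
   Context: $N(v)$ is the neighbor set of $v$, $d(v)=|N(v)|$, and $G_{N(v)}$ is the subgraph of $G$ induced by $N(v)$. For an integer $k\ge 2$, the $k$-truss of a graph $H$ is the subgraph formed by the largest edge set $F\subseteq E(H)$ such that every edge of $F$ lies in at least $k-2$ triangles all of whose edges are in $F$ (its vertices are those incident to edges of $F$). $score(v)$ is the number of connected components of the $k$-truss of $G_{N(v)}$. *)

theory Defs
  imports Main
begin

definition simple_graph :: "'a set \<Rightarrow> 'a set set \<Rightarrow> bool" where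
  "simple_graph V E \<longleftrightarrow> finite V \<and>
     (\<forall>e\<in>E. \<exists>x y. x \<noteq> y \<and> x \<in> V \<and> y \<in> V \<and> e = {x, y})"

definition nbrs :: "'a set set \<Rightarrow> 'a \<Rightarrow> 'a set" where
  "nbrs E v = {u. {u, v} \<in> E}"

definition degree :: "'a set set \<Rightarrow> 'a \<Rightarrow> nat" where
  "degree E v = card (nbrs E v)"

definition induced_edges :: "'a set set \<Rightarrow> 'a set \<Rightarrow> 'a set set" where
  "induced_edges E S = {e \<in> E. e \<subseteq> S}"

definition truss_ok :: "nat \<Rightarrow> 'a set set \<Rightarrow> bool" where
  "truss_ok k F \<longleftrightarrow>
     (\<forall>x y. {x, y} \<in> F \<longrightarrow> card {w. {x, w} \<in> F \<and> {y, w} \<in> F} \<ge> k - 2)"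

definition truss_edges :: "nat \<Rightarrow> 'a set set \<Rightarrow> 'a set set" where
  "truss_edges k EH = (GREATEST F. F \<subseteq> EH \<and> truss_ok k F)"

(* number of connected components of the graph formed by edge set F,
   whose vertices are those incident to edges of F *)
definition num_components :: "'a set set \<Rightarrow> nat" where
  "num_components F =
     card ((\<Union>F) // {(x, y). x \<in> \<Union>F \<and> y \<in> \<Union>F \<and>
                          (x, y) \<in> {(a, b). {a, b} \<in> F}\<^sup>*})"

definition score :: "nat \<Rightarrow> 'a set set \<Rightarrow> 'a \<Rightarrow> nat" where
  "score k E v = num_components (truss_edges k (induced_edges E (nbrs E v)))"

end

theory Submission
  imports Defs
begin

(* Truss-ok edge sets are closed under unions, so the k-truss is the union of all of them and is
   itself truss-ok. In a truss-ok graph every edge {u,y} has k - 2 common neighbours, so every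
   component contains at least k vertices and every vertex has degree at least k - 1; by the
   handshake inequality every component then spans at least k(k-1)/2 edges. Since components are
   vertex- and edge-disjoint, both bounds on score(v) follow by summing over the components of the
   k-truss of G_N(v). *)

lemma truss_ok_Union:
  assumes "finite (\<Union>(\<Union>\<F>))" and "\<And>F. F \<in> \<F> \<Longrightarrow> truss_ok k F"
  shows "truss_ok k (\<Union>\<F>)"
  unfolding truss_ok_def
proof (intro allI impI)
  fix x y
  assume "{x, y} \<in> \<Union>\<F>"
  then obtain F where F: "F \<in> \<F>" "{x, y} \<in> F" by blast
  have "k - 2 \<le> card {w. {x, w} \<in> F \<and> {y, w} \<in> F}"
    using assms(2)[OF F(1)] F(2) unfolding truss_ok_def by blast
  also have "\<dots> \<le> card {w. {x, w} \<in> \<Union>\<F> \<and> {y, w} \<in> \<Union>\<F>}"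
    by (rule card_mono[OF finite_subset[OF _ assms(1)]]) (use F(1) in blast)+
  finally show "k - 2 \<le> card {w. {x, w} \<in> \<Union>\<F> \<and> {y, w} \<in> \<Union>\<F>}" .
qed

lemma truss_edges_eq_Union:
  assumes "finite (\<Union>EH)"
  shows "truss_edges k EH = \<Union>{F. F \<subseteq> EH \<and> truss_ok k F}"
proof -
  have "truss_ok k (\<Union>{F. F \<subseteq> EH \<and> truss_ok k F})"
    by (rule truss_ok_Union) (auto intro: finite_subset[OF _ assms])
  then show ?thesis
    unfolding truss_edges_def by (intro Greatest_equality) auto
qed

lemma
  assumes "finite (\<Union>EH)"
  shows truss_edges_subset: "truss_edges k EH \<subseteq> EH"
    and truss_ok_truss_edges: "truss_ok k (truss_edges k EH)"
proof -
  show "truss_edges k EH \<subseteq> EH"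
    using truss_edges_eq_Union[OF assms] by blast
  show "truss_ok k (truss_edges k EH)"
    unfolding truss_edges_eq_Union[OF assms]
    by (rule truss_ok_Union) (auto intro: finite_subset[OF _ assms])
qed

definition connected_rel :: "'a set set \<Rightarrow> ('a \<times> 'a) set" where
  "connected_rel F =
     {(x, y). x \<in> \<Union>F \<and> y \<in> \<Union>F \<and> (x, y) \<in> {(a, b). {a, b} \<in> F}\<^sup>*}"

definition components :: "'a set set \<Rightarrow> 'a set set" where
  "components F = \<Union>F // connected_rel F"

lemma num_components_eq_card_components: "num_components F = card (components F)"
  unfolding num_components_def components_def connected_rel_def ..

lemma equiv_connected_rel: "equiv (\<Union>F) (connected_rel F)"
proof -
  have "sym {(a, b). {a, b} \<in> F}"
    by (auto simp: sym_def insert_commute)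
  from sym_rtrancl[OF this] show ?thesis
    unfolding equiv_def refl_on_def sym_def trans_def connected_rel_def
    by (auto intro: rtrancl_trans)
qed

lemma Union_components: "\<Union>(components F) = \<Union>F"
  unfolding components_def by (rule Union_quotient[OF equiv_connected_rel])

lemma components_disjoint:
  "C \<in> components F \<Longrightarrow> D \<in> components F \<Longrightarrow> C \<noteq> D \<Longrightarrow> C \<inter> D = {}"
  using quotient_disj[OF equiv_connected_rel] unfolding components_def by blast

lemma component_nonempty: "C \<in> components F \<Longrightarrow> C \<noteq> {}"
  unfolding components_def by (rule in_quotient_imp_non_empty[OF equiv_connected_rel])

lemma component_subset: "C \<in> components F \<Longrightarrow> C \<subseteq> \<Union>F"
  by (metis Union_components Union_upper)

lemma edge_in_connected_rel:
  assumes "{u, w} \<in> F"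
  shows "(u, w) \<in> connected_rel F"
proof -
  have "(u, w) \<in> {(a, b). {a, b} \<in> F}\<^sup>*"
    by (rule r_into_rtrancl) (simp add: assms)
  then show ?thesis
    unfolding connected_rel_def using assms by blast
qed

lemma component_closed: "C \<in> components F \<Longrightarrow> u \<in> C \<Longrightarrow> {u, w} \<in> F \<Longrightarrow> w \<in> C"
  unfolding components_def
  by (rule in_quotient_imp_closed[OF equiv_connected_rel _ _ edge_in_connected_rel])

lemma ordered_pairs_subset: "e = {x, y} \<Longrightarrow> {(a, b). {a, b} = e} \<subseteq> {(x, y), (y, x)}"
  by (auto simp: doubleton_eq_iff)

lemma finite_ordered_pairs: "finite {(a, b). {a, b} = e}"
proof (cases "\<exists>x y. e = {x, y}")
  case True
  then obtain x y where "e = {x, y}" by blast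
  then show ?thesis
    by (rule finite_subset[OF ordered_pairs_subset]) simp
next
  case False
  then have "{(a, b). {a, b} = e} = {}" by auto
  then show ?thesis by simp
qed

lemma card_ordered_pairs_le_2: "card {(a, b). {a, b} = e} \<le> 2"
proof (cases "\<exists>x y. e = {x, y}")
  case True
  then obtain x y where "e = {x, y}" by blast
  then have "card {(a, b). {a, b} = e} \<le> card {(x, y), (y, x)}"
    by (intro card_mono ordered_pairs_subset) simp_all
  also have "\<dots> \<le> 2"
    by (simp add: card_insert_le_m1)
  finally show ?thesis .
next
  case False
  then have "{(a, b). {a, b} = e} = {}" by auto
  then show ?thesis by simp
qed

lemma sum_degree_le_twice_card_edges:
  assumes "finite F" and "finite C"
  shows "(\<Sum>u\<in>C. card {w \<in> C. {u, w} \<in> F}) \<le> 2 * card {e \<in> F. e \<subseteq> C}"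
proof -
  let ?EC = "{e \<in> F. e \<subseteq> C}"
  have "(\<Sum>u\<in>C. card {w \<in> C. {u, w} \<in> F}) = card (SIGMA u:C. {w \<in> C. {u, w} \<in> F})"
    by (rule card_SigmaI[symmetric]) (use assms(2) in auto)
  also have "\<dots> \<le> card (\<Union>e\<in>?EC. {(a, b). {a, b} = e})"
    by (rule card_mono) (use assms(1) finite_ordered_pairs in auto)
  also have "\<dots> \<le> (\<Sum>e\<in>?EC. card {(a, b). {a, b} = e})"
    by (rule card_UN_le) (use assms(1) in simp)
  also have "\<dots> \<le> (\<Sum>e\<in>?EC. 2)"
    by (rule sum_mono) (rule card_ordered_pairs_le_2)
  finally show ?thesis by simp
qed

locale truss_graph =
  fixes k :: nat and F :: "'a set set"
  assumes finite_vertices: "finite (\<Union>F)"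
    and edge_doubleton: "e \<in> F \<Longrightarrow> \<exists>a b. a \<noteq> b \<and> e = {a, b}"
    and truss_ok: "truss_ok k F"
    and two_le_k: "2 \<le> k"
begin

lemma finite_edges: "finite F"
  using finite_vertices by (rule finite_UnionD)

lemma finite_components: "finite (components F)"
  using finite_vertices by (metis Union_components finite_UnionD)

lemma singleton_notin_edges: "{x} \<notin> F"
  using edge_doubleton by (metis doubleton_eq_iff insert_absorb2)

lemma vertex_has_edge: "u \<in> \<Union>F \<Longrightarrow> \<exists>y. {u, y} \<in> F"
  using edge_doubleton by (fastforce simp: insert_commute)

lemma finite_neighbours: "finite {w. {u, w} \<in> F}"
  by (rule finite_subset[OF _ finite_vertices]) blast

lemma finite_component: "C \<in> components F \<Longrightarrow> finite C"
  using finite_vertices component_subset finite_subset by blast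

lemma card_common_neighbours_ge: "{x, y} \<in> F \<Longrightarrow> k - 2 \<le> card {w. {x, w} \<in> F \<and> {y, w} \<in> F}"
  using truss_ok unfolding truss_ok_def by blast

lemma card_neighbours_ge:
  assumes "u \<in> \<Union>F"
  shows "k - 1 \<le> card {w. {u, w} \<in> F}"
proof -
  obtain y where y: "{u, y} \<in> F"
    using vertex_has_edge[OF assms] by blast
  let ?S = "{w. {u, w} \<in> F \<and> {y, w} \<in> F}"
  have "y \<notin> ?S"
    using singleton_notin_edges by auto
  moreover have "finite ?S"
    by (rule finite_subset[OF _ finite_neighbours]) blast
  ultimately have "k - 1 \<le> card (insert y ?S)"
    using card_common_neighbours_ge[OF y] two_le_k by simp
  also have "\<dots> \<le> card {w. {u, w} \<in> F}"
    by (rule card_mono[OF finite_neighbours]) (use y in blast)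
  finally show ?thesis .
qed

lemma card_component_ge:
  assumes C: "C \<in> components F"
  shows "k \<le> card C"
proof -
  obtain u where u: "u \<in> C"
    using component_nonempty[OF C] by blast
  then have "k - 1 \<le> card {w. {u, w} \<in> F}"
    using component_subset[OF C] card_neighbours_ge by blast
  moreover have "u \<notin> {w. {u, w} \<in> F}"
    using singleton_notin_edges by simp
  ultimately have "k \<le> card (insert u {w. {u, w} \<in> F})"
    using finite_neighbours two_le_k by simp
  also have "\<dots> \<le> card C"
    by (rule card_mono[OF finite_component[OF C]]) (use u component_closed[OF C u] in blast)
  finally show ?thesis .
qed

lemma card_component_edges_ge:
  assumes C: "C \<in> components F"
  shows "k * (k - 1) \<le> 2 * card {e \<in> F. e \<subseteq> C}"
proof -
  have "k * (k - 1) \<le> card C * (k - 1)"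
    using card_component_ge[OF C] by simp
  also have "\<dots> \<le> (\<Sum>u\<in>C. card {w \<in> C. {u, w} \<in> F})"
  proof (rule sum_bounded_below[where 'a = nat, simplified])
    fix u
    assume u: "u \<in> C"
    then have "{w \<in> C. {u, w} \<in> F} = {w. {u, w} \<in> F}"
      using component_closed[OF C u] by blast
    moreover have "u \<in> \<Union>F"
      using component_subset[OF C] u by blast
    ultimately show "k - 1 \<le> card {w \<in> C. {u, w} \<in> F}"
      using card_neighbours_ge by simp
  qed
  also have "\<dots> \<le> 2 * card {e \<in> F. e \<subseteq> C}"
    by (rule sum_degree_le_twice_card_edges[OF finite_edges finite_component[OF C]])
  finally show ?thesis .
qed

lemma num_components_mult_le_card_vertices: "num_components F * k \<le> card (\<Union>F)"
proof -
  have "num_components F * k \<le> (\<Sum>C\<in>components F. card C)"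
    unfolding num_components_eq_card_components
    using sum_bounded_below[of "components F" k card] card_component_ge by simp
  also have "\<dots> = card (\<Union>(components F))"
    by (rule card_Union_disjoint[symmetric])
      (use components_disjoint finite_component in \<open>auto simp: pairwise_def disjnt_def\<close>)
  finally show ?thesis
    by (simp add: Union_components)
qed

lemma num_components_mult_le_card_edges: "num_components F * (k * (k - 1)) \<le> 2 * card F"
proof -
  have "num_components F * (k * (k - 1)) \<le> (\<Sum>C\<in>components F. 2 * card {e \<in> F. e \<subseteq> C})"
    unfolding num_components_eq_card_components
    using sum_bounded_below[of "components F" "k * (k - 1)"] card_component_edges_ge by simp
  also have "\<dots> = 2 * card (\<Union>C\<in>components F. {e \<in> F. e \<subseteq> C})"
  proof -
    have "{e \<in> F. e \<subseteq> C} \<inter> {e \<in> F. e \<subseteq> D} = {}"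
      if "C \<in> components F" "D \<in> components F" "C \<noteq> D" for C D
    proof -
      have "e \<noteq> {}" if "e \<in> F" for e
        using edge_doubleton[OF that] by blast
      then show ?thesis
        using components_disjoint[OF that] by blast
    qed
    then show ?thesis
      using finite_components finite_edges by (simp add: card_UN_disjoint sum_distrib_left)
  qed
  also have "\<dots> \<le> 2 * card F"
    by (intro mult_le_mono2 card_mono[OF finite_edges]) blast
  finally show ?thesis .
qed

end

lemma simple_graph_finite_nbrs:
  assumes "simple_graph V E"
  shows "finite (nbrs E v)"
proof (rule finite_subset)
  show "nbrs E v \<subseteq> V"
  proof
    fix u
    assume "u \<in> nbrs E v"
    then obtain x y where "x \<in> V" "y \<in> V" "{u, v} = {x, y}"
      using assms unfolding simple_graph_def nbrs_def by blast
    then show "u \<in> V"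
      by (auto simp: doubleton_eq_iff)
  qed
  show "finite V"
    using assms unfolding simple_graph_def by blast
qed

lemma simple_graph_edge_doubleton: "simple_graph V E \<Longrightarrow> e \<in> E \<Longrightarrow> \<exists>a b. a \<noteq> b \<and> e = {a, b}"
  unfolding simple_graph_def by blast

lemma Union_induced_edges_subset: "\<Union>(induced_edges E S) \<subseteq> S"
  unfolding induced_edges_def by blast

theorem lemma2:
  fixes V :: "'a set" and E :: "'a set set" and k :: nat and v :: 'a
  assumes "simple_graph V E" and "k \<ge> 2" and "v \<in> V"
  shows "score k E v \<le> min (degree E v div k)
           ((2 * card (induced_edges E (nbrs E v))) div (k * (k - 1)))"
proof -
  let ?N = "nbrs E v"
  let ?EH = "induced_edges E ?N"
  let ?T = "truss_edges k ?EH"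
  have finite_N: "finite ?N"
    by (rule simple_graph_finite_nbrs[OF assms(1)])
  have finite_EH: "finite (\<Union>?EH)"
    by (rule finite_subset[OF Union_induced_edges_subset finite_N])
  have T_sub: "?T \<subseteq> ?EH"
    by (rule truss_edges_subset[OF finite_EH])
  interpret truss_graph k ?T
  proof
    show "finite (\<Union>?T)"
      by (rule finite_subset[OF Union_mono[OF T_sub] finite_EH])
    show "\<exists>a b. a \<noteq> b \<and> e = {a, b}" if "e \<in> ?T" for e
      using that T_sub simple_graph_edge_doubleton[OF assms(1)] unfolding induced_edges_def by blast
  qed (use truss_ok_truss_edges[OF finite_EH] assms(2) in auto)
  have "card (\<Union>?T) \<le> degree E v"
    unfolding degree_def
    by (rule card_mono[OF finite_N subset_trans[OF Union_mono[OF T_sub] Union_induced_edges_subset]])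
  then have "score k E v * k \<le> degree E v"
    using num_components_mult_le_card_vertices unfolding score_def by linarith
  moreover have "score k E v * (k * (k - 1)) \<le> 2 * card ?EH"
    using num_components_mult_le_card_edges card_mono[OF finite_UnionD[OF finite_EH] T_sub]
    unfolding score_def by linarith
  moreover have "0 < k" "0 < k * (k - 1)"
    using assms(2) by auto
  ultimately show ?thesis
    by (simp add: less_eq_div_iff_mult_less_eq)
qed

end
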